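(* Suppose $\rho\in\mathcal{P}$. Then there is a positive constant $C_{10}$ such that $|V_m(x,y)|\le C_{10}$ for all $(x,y)$ with $x>a+\max\{d_1,4a\}$ and for all $0<\delta\le\delta_{\psi^-}$.
   Context: Fix $a>0$. For $0<\delta<1$ and constants $\beta>0$, $\lambda\in\mathbb{R}$ ($\lambda$ feasible: $\lambda>0$ if $0<\beta<1$, $\lambda\ge-1$ if $\beta=1$, $\lambda\ne0$ if $\beta>1$), put $\mu=\delta+\lambda\delta^{\beta}$, and let $\delta_\mu\in(0,1)$ be a number with $\mu\ge0$ for $0<\delta\le\delta_\mu$. The dielectric constant is $\varepsilon_c=1+\mathrm{i}\mu$ for $x<0$, $\varepsilon_s=-1+\mathrm{i}\delta$ for $0\le x\le a$, $\varepsilon_m=1$ for $x>a$. Let $\mathcal{M}=\{(x,y)\in\mathbb{R}^2:x>a\}$. $\mathcal{P}$ is the set of real-valued $\rho\in L^2(\mathcal{M})\cap L^\infty(\mathcal{M})$ with compact support in $\mathcal{M}$, $0<|\operatorname{supp}\rho|<\infty$ and $\int\!\!\int\rho=0$; $\rho$ is extended by $0$. $d_0,d_1$ are the minimal and maximal $x$-coordinates of $\operatorname{supp}\rho$. Fourier transform in $y$: $\widehat f(x,k)=\int f(x,y)\mathrm{e}^{-\mathrm{i}ky}\mathrm{d}y$; $I_k=\int_{d_0}^{d_1}\widehat\rho(s,k)\mathrm{e}^{-|k|s}\mathrm{d}s$. Let $\chi_c=\varepsilon_s/\varepsilon_c$, $\psi_k^+=\frac{1}{2\chi_c}[(\chi_c+1)\mathrm{e}^{|k|a}+(\chi_c-1)\mathrm{e}^{-|k|a}]$,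 $\psi_k^-=\frac{|k|\varepsilon_s}{2\chi_c}[(\chi_c+1)\mathrm{e}^{|k|a}-(\chi_c-1)\mathrm{e}^{-|k|a}]$, $A_k=I_k/(\mathrm{e}^{-|k|a}(|k|\psi_k^++\psi_k^-))$. $\delta_{\psi^-}=\delta_{\psi^-}(\beta,\lambda)\in(0,\delta_\mu]$ is a number such that $|\psi_k^+-\psi_k^-/|k||^2\le\frac52(\delta+\mu)^2\mathrm{e}^{2|k|a}$ for all $k\ne0$ and all $0<\delta\le\delta_{\psi^-}$. The potential $V$ is defined by its $y$-Fourier transform: for $k\ne0$, $\widehat V(x,k)=A_k\mathrm{e}^{|k|x}$ for $x<0$; $\widehat V(x,k)=\frac{A_k}{2\chi_c}[(\chi_c+1)\mathrm{e}^{|k|x}+(\chi_c-1)\mathrm{e}^{-|k|x}]$ for $0\le x\le a$; $\widehat V(x,k)=A_k\psi_k^+\cosh(|k|(x-a))+\frac{A_k\psi_k^-}{|k|}\sinh(|k|(x-a))+\frac1{|k|}\int_a^x\sinh(|k|(x'-x))\widehat\rho(x',k)\mathrm{d}x'$ for $x>a$. It solves $-\nabla\cdot(\varepsilon\nabla V)=\rho$ in $\mathbb{R}^2$ with $V$, $\varepsilon\partial_xV$ continuous across $x=0,a$ and $\partial_xV\to0$ as $|x|\to\infty$. $V_m=V$ restricted to $\{x>a\}$; on $\{x>d_1\}$ it is harmonic and pointwise values refer to its smooth representative. *)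

theory Defs
  imports "HOL-Analysis.Analysis"
begin

definition ess_supp :: "(real \<times> real \<Rightarrow> real) \<Rightarrow> (real \<times> real) set" where
  "ess_supp \<rho> = {p. \<forall>e>0. emeasure lborel {q \<in> ball p e. \<rho> q \<noteq> 0} > 0}"

definition d0 :: "(real \<times> real \<Rightarrow> real) \<Rightarrow> real" where
  "d0 \<rho> = Inf (fst ` ess_supp \<rho>)"

definition d1 :: "(real \<times> real \<Rightarrow> real) \<Rightarrow> real" where
  "d1 \<rho> = Sup (fst ` ess_supp \<rho>)"

text \<open>The class P (rho defined on R^2, extended by 0 outside M = {x > a}).\<close>
definition charge_class :: "real \<Rightarrow> (real \<times> real \<Rightarrow> real) \<Rightarrow> bool" where
  "charge_class a \<rho> \<longleftrightarrow>
     \<rho> \<in> borel_measurable lborel \<and>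
     (\<forall>p. fst p \<le> a \<longrightarrow> \<rho> p = 0) \<and>
     integrable lborel (\<lambda>p. (\<rho> p)\<^sup>2) \<and>
     (\<exists>B. AE p in lborel. \<bar>\<rho> p\<bar> \<le> B) \<and>
     compact (ess_supp \<rho>) \<and> ess_supp \<rho> \<subseteq> {p. fst p > a} \<and>
     0 < emeasure lborel (ess_supp \<rho>) \<and> emeasure lborel (ess_supp \<rho>) < \<infinity> \<and>
     integrable lborel \<rho> \<and> integral\<^sup>L lborel \<rho> = 0"

definition rho_hat :: "(real \<times> real \<Rightarrow> real) \<Rightarrow> real \<Rightarrow> real \<Rightarrow> complex" where
  "rho_hat \<rho> x k = (LINT y|lborel. complex_of_real (\<rho> (x, y)) * cis (- (k * y)))"

definition I_k :: "(real \<times> real \<Rightarrow> real) \<Rightarrow> real \<Rightarrow> complex" where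
  "I_k \<rho> k = (LINT s:{d0 \<rho>..d1 \<rho>}|lborel. rho_hat \<rho> s k * complex_of_real (exp (- \<bar>k\<bar> * s)))"

definition feasible :: "real \<Rightarrow> real \<Rightarrow> bool" where
  "feasible \<beta> lam \<longleftrightarrow> \<beta> > 0 \<and>
     (\<beta> < 1 \<longrightarrow> lam > 0) \<and> (\<beta> = 1 \<longrightarrow> lam \<ge> -1) \<and> (\<beta> > 1 \<longrightarrow> lam \<noteq> 0)"

definition mu :: "real \<Rightarrow> real \<Rightarrow> real \<Rightarrow> real" where
  "mu \<beta> lam \<delta> = \<delta> + lam * \<delta> powr \<beta>"

definition eps_c :: "real \<Rightarrow> real \<Rightarrow> real \<Rightarrow> complex" where
  "eps_c \<beta> lam \<delta> = 1 + \<i> * complex_of_real (mu \<beta> lam \<delta>)"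

definition eps_s :: "real \<Rightarrow> complex" where
  "eps_s \<delta> = -1 + \<i> * complex_of_real \<delta>"

definition chi_c :: "real \<Rightarrow> real \<Rightarrow> real \<Rightarrow> complex" where
  "chi_c \<beta> lam \<delta> = eps_s \<delta> / eps_c \<beta> lam \<delta>"

definition psi_plus :: "real \<Rightarrow> real \<Rightarrow> real \<Rightarrow> real \<Rightarrow> real \<Rightarrow> complex" where
  "psi_plus a \<beta> lam \<delta> k =
     (let chi = chi_c \<beta> lam \<delta> in
       1 / (2 * chi) * ((chi + 1) * complex_of_real (exp (\<bar>k\<bar> * a))
                       + (chi - 1) * complex_of_real (exp (- \<bar>k\<bar> * a))))"

definition psi_minus :: "real \<Rightarrow> real \<Rightarrow> real \<Rightarrow> real \<Rightarrow> real \<Rightarrow> complex" where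
  "psi_minus a \<beta> lam \<delta> k =
     (let chi = chi_c \<beta> lam \<delta> in
       complex_of_real \<bar>k\<bar> * eps_s \<delta> / (2 * chi) *
         ((chi + 1) * complex_of_real (exp (\<bar>k\<bar> * a))
          - (chi - 1) * complex_of_real (exp (- \<bar>k\<bar> * a))))"

definition A_k :: "real \<Rightarrow> real \<Rightarrow> real \<Rightarrow> real \<Rightarrow> (real \<times> real \<Rightarrow> real) \<Rightarrow> real \<Rightarrow> complex" where
  "A_k a \<beta> lam \<delta> \<rho> k =
     I_k \<rho> k / (complex_of_real (exp (- \<bar>k\<bar> * a)) *
                (complex_of_real \<bar>k\<bar> * psi_plus a \<beta> lam \<delta> k + psi_minus a \<beta> lam \<delta> k))"

text \<open>Fourier transform of V in the region x > a (for k \<noteq> 0).\<close>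
definition Vhat_m :: "real \<Rightarrow> real \<Rightarrow> real \<Rightarrow> real \<Rightarrow> (real \<times> real \<Rightarrow> real) \<Rightarrow> real \<Rightarrow> real \<Rightarrow> complex" where
  "Vhat_m a \<beta> lam \<delta> \<rho> x k =
     A_k a \<beta> lam \<delta> \<rho> k * psi_plus a \<beta> lam \<delta> k * complex_of_real (cosh (\<bar>k\<bar> * (x - a)))
     + A_k a \<beta> lam \<delta> \<rho> k * psi_minus a \<beta> lam \<delta> k / complex_of_real \<bar>k\<bar>
         * complex_of_real (sinh (\<bar>k\<bar> * (x - a)))
     + 1 / complex_of_real \<bar>k\<bar> *
         (LINT x':{a..x}|lborel. complex_of_real (sinh (\<bar>k\<bar> * (x' - x))) * rho_hat \<rho> x' k)"

text \<open>V_m(x,y) via the inverse Fourier transform in y (the point k = 0 is a null set).\<close>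
definition V_m :: "real \<Rightarrow> real \<Rightarrow> real \<Rightarrow> real \<Rightarrow> (real \<times> real \<Rightarrow> real) \<Rightarrow> real \<Rightarrow> real \<Rightarrow> complex" where
  "V_m a \<beta> lam \<delta> \<rho> x y =
     1 / complex_of_real (2 * pi) * (LINT k|lborel. Vhat_m a \<beta> lam \<delta> \<rho> x k * cis (k * y))"

end

theory Submission
  imports Defs "HOL-Probability.Sinc_Integral" "HOL-Probability.Characteristic_Functions"
begin

(* For x > d1 the source term of Vhat_m only sees sinh(|k|(x' - x)) for x' on the support
   of rho, where it is a combination of exp(|k| x') and exp(-|k| x'). The second part is I_k
   and cancels the growing part of the cosh/sinh terms, leaving
     Vhat_m = A_k (psi+ - psi-/|k|) exp(-|k|(x - a))/2 + exp(-|k| x)/(2|k|) * (moment of rho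
              against exp(|k| x')).
   Because rho has mean zero and compact support, such moments are O(|k|), which absorbs the
   factors 1/|k|. Together with |psi+ + psi-/|k|| >= exp(-|k| a) and the hypothesis on
   psi+ - psi-/|k| this gives |Vhat_m(x, k)| <= C exp(-|k| a) uniformly in delta and x, so the
   inverse Fourier integral is bounded by C/(2 pi) times the integral of exp(-|k| a). *)

lemma norm_cis_minus_one_le: "cmod (cis t - 1) \<le> \<bar>t\<bar>"
  using iexp_approx1[of t 0] by (simp add: cis_conv_exp)

lemma abs_exp_neg_minus_one_le:
  assumes "0 \<le> (u::real)"
  shows "\<bar>exp (- u) - 1\<bar> \<le> u"
  using exp_ge_add_one_self[of "- u"] assms by (simp add: abs_if)

lemma integrable_exp_neg_abs_mult:
  assumes "0 < (a::real)"
  shows "integrable lborel (\<lambda>k::real. exp (- \<bar>k\<bar> * a))"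
proof -
  define h where "h k = indicator {0<..} k * exp (- (k * a)) + indicator {0<..} (- k) * exp (- ((- k) * a))"
    for k :: real
  have right: "integrable lborel (\<lambda>k::real. indicator {0<..} k * exp (- (k * a)))"
    using integrable_I0i_exp_mscale[OF assms] by (simp add: set_integrable_def)
  moreover have "integrable lborel (\<lambda>k::real. indicator {0<..} (0 + (-1) * k) * exp (- ((0 + (-1) * k) * a)))"
    using lborel_integrable_real_affine_iff[of "-1" "\<lambda>k::real. indicator {0<..} k * exp (- (k * a))" 0] right
    by simp
  ultimately have "integrable lborel h"
    unfolding h_def by simp
  moreover have "AE k in lborel. h k = exp (- \<bar>k\<bar> * a)"
    using AE_lborel_singleton[of 0] by eventually_elim (auto simp: h_def indicator_def)
  moreover have "(\<lambda>k::real. exp (- \<bar>k\<bar> * a)) \<in> borel_measurable lborel"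
    by measurable
  ultimately show ?thesis
    by (metis integrable_cong_AE_imp)
qed

lemma norm_inverse_fourier_le:
  assumes "integrable lborel g" and "\<And>k. cmod (f k) \<le> g k"
  shows "cmod (1 / complex_of_real (2 * pi) * (LINT k|lborel. f k * cis (k * y)))
           \<le> 1 / (2 * pi) * (LINT k|lborel. g k)"
proof -
  have "cmod (LINT k|lborel. f k * cis (k * y)) \<le> (LINT k|lborel. cmod (f k * cis (k * y)))"
    by (rule integral_norm_bound)
  also have "\<dots> \<le> (LINT k|lborel. g k)"
    using assms order_trans[OF norm_ge_zero assms(2)] by (intro integral_mono') (auto simp: norm_mult)
  finally show ?thesis
    by (simp add: norm_mult norm_divide divide_right_mono)
qed

text \<open>The complement of the essential support is a union of null balls, and by Lindelof
  countably many of them suffice.\<close>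
lemma AE_in_ess_supp:
  assumes [measurable]: "\<rho> \<in> borel_measurable lborel"
  shows "AE p in lborel. \<rho> p \<noteq> 0 \<longrightarrow> p \<in> ess_supp \<rho>"
proof -
  define F where "F = {ball p e | p e. e > 0 \<and> emeasure lborel {q \<in> ball p e. \<rho> q \<noteq> 0} = 0}"
  obtain F' where F': "F' \<subseteq> F" "countable F'" "\<Union>F' = \<Union>F"
    using Lindelof[of F] unfolding F_def by auto
  have "AE q in lborel. \<forall>B\<in>F'. q \<in> B \<longrightarrow> \<rho> q = 0"
  proof (rule AE_ball_countable')
    fix B assume "B \<in> F'"
    then obtain p e where B: "B = ball p e" "emeasure lborel {q \<in> ball p e. \<rho> q \<noteq> 0} = 0"
      using F' F_def by auto
    have "{q \<in> ball p e. \<rho> q \<noteq> 0} \<in> null_sets lborel"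
      using B by (simp add: null_sets_def)
    then show "AE q in lborel. q \<in> B \<longrightarrow> \<rho> q = 0"
      by (rule AE_I'[of "{q \<in> ball p e. \<rho> q \<noteq> 0}"]) (auto simp: B)
  qed (rule F')
  then show ?thesis
  proof (rule AE_mp, intro AE_I2 impI)
    fix q assume q: "\<forall>B\<in>F'. q \<in> B \<longrightarrow> \<rho> q = 0" and "\<rho> q \<noteq> 0"
    show "q \<in> ess_supp \<rho>"
    proof (rule ccontr)
      assume "q \<notin> ess_supp \<rho>"
      then obtain e where "e > 0" "\<not> emeasure lborel {x \<in> ball q e. \<rho> x \<noteq> 0} > 0"
        by (auto simp: ess_supp_def)
      then have "ball q e \<in> F"
        unfolding F_def by (intro CollectI exI[of _ q] exI[of _ e]) auto
      then have "q \<in> \<Union>F"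
        using \<open>e > 0\<close> by (metis UnionI centre_in_ball)
      then have "q \<in> \<Union>F'"
        using F'(3) by simp
      with q \<open>\<rho> q \<noteq> 0\<close> show False by auto
    qed
  qed
qed

lemma charge_class_ess_supp_ne:
  assumes "charge_class a \<rho>"
  shows "ess_supp \<rho> \<noteq> {}"
  using assms by (auto simp: charge_class_def)

lemma charge_class_fst_ess_supp:
  assumes "charge_class a \<rho>" and "p \<in> ess_supp \<rho>"
  shows "fst p \<in> {d0 \<rho>..d1 \<rho>}"
proof -
  have "compact (fst ` ess_supp \<rho>)"
    using assms by (intro compact_continuous_image continuous_intros) (auto simp: charge_class_def)
  then have "bdd_below (fst ` ess_supp \<rho>)" "bdd_above (fst ` ess_supp \<rho>)"
    by (auto intro: bounded_imp_bdd_below bounded_imp_bdd_above compact_imp_bounded)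
  then show ?thesis
    unfolding d0_def d1_def using assms(2) by (auto intro: cInf_lower cSup_upper)
qed

lemma charge_class_d0_le_d1:
  assumes "charge_class a \<rho>"
  shows "d0 \<rho> \<le> d1 \<rho>"
  using charge_class_ess_supp_ne[OF assms] charge_class_fst_ess_supp[OF assms] by fastforce

lemma charge_class_less_d0:
  assumes "charge_class a \<rho>"
  shows "a < d0 \<rho>"
proof -
  have "compact (fst ` ess_supp \<rho>)"
    using assms by (intro compact_continuous_image continuous_intros) (auto simp: charge_class_def)
  then obtain s where s: "s \<in> fst ` ess_supp \<rho>" "\<forall>t\<in>fst ` ess_supp \<rho>. s \<le> t"
    using compact_attains_inf charge_class_ess_supp_ne[OF assms] by blast
  then have "d0 \<rho> = s"
    unfolding d0_def by (intro cInf_eq_minimum) auto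
  moreover have "a < s"
    using s assms by (auto simp: charge_class_def)
  ultimately show ?thesis by simp
qed

lemma charge_class_snd_ess_supp_bounded:
  assumes "charge_class a \<rho>"
  obtains Y where "\<forall>p\<in>ess_supp \<rho>. \<bar>snd p\<bar> \<le> Y"
proof -
  have "compact (snd ` ess_supp \<rho>)"
    using assms by (intro compact_continuous_image continuous_intros) (auto simp: charge_class_def)
  then obtain Y where "\<forall>y\<in>snd ` ess_supp \<rho>. norm y \<le> Y"
    using compact_imp_bounded bounded_iff by metis
  then show ?thesis
    using that by auto
qed

lemma norm_psi_plus_add_psi_minus_ge:
  assumes "0 < \<delta>" "\<delta> < 1" and "0 \<le> mu \<beta> lam \<delta>" and "k \<noteq> 0"
  shows "exp (- \<bar>k\<bar> * a) \<le> cmod (psi_plus a \<beta> lam \<delta> k + psi_minus a \<beta> lam \<delta> k / complex_of_real \<bar>k\<bar>)"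
proof -
  define m where "m = mu \<beta> lam \<delta>"
  define es where "es = eps_s \<delta>"
  define ec where "ec = eps_c \<beta> lam \<delta>"
  define E where "E = exp (\<bar>k\<bar> * a)"
  define E' where "E' = exp (- \<bar>k\<bar> * a)"
  define S where "S = psi_plus a \<beta> lam \<delta> k + psi_minus a \<beta> lam \<delta> k / complex_of_real \<bar>k\<bar>"
  define D where "D = (es + ec) * (1 + es) * complex_of_real E + (es - ec) * (1 - es) * complex_of_real E'"
  have es: "es = Complex (-1) \<delta>" and ec: "ec = Complex 1 m"
    unfolding es_def eps_s_def ec_def eps_c_def m_def by (simp_all add: complex_eq_iff)
  have "es \<noteq> 0" "ec \<noteq> 0" "complex_of_real \<bar>k\<bar> \<noteq> 0"
    using es ec assms(4) by (auto simp: complex_eq_iff)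
  then have S_D: "S * (2 * es) = D"
    unfolding S_def psi_plus_def psi_minus_def Let_def chi_c_def D_def E_def E'_def
      es_def[symmetric] ec_def[symmetric]
    by (simp add: field_simps)
  have "Re D = - \<delta> * (\<delta> + m) * E + (-4 + \<delta> * (\<delta> - m)) * E'"
    unfolding D_def es ec by (simp add: algebra_simps)
  moreover have "\<delta> * \<delta> < 1"
    using assms mult_strict_mono[of \<delta> 1 \<delta> 1] by auto
  moreover have "0 \<le> E * (\<delta> * \<delta>)" "0 \<le> E * (\<delta> * m)" "0 \<le> E' * (\<delta> * m)"
    using assms unfolding E_def E'_def m_def by auto
  moreover have "E' * (\<delta> * \<delta>) \<le> E'"
    using \<open>\<delta> * \<delta> < 1\<close> mult_left_le[of "\<delta> * \<delta>" E'] unfolding E'_def by simp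
  ultimately have "Re D \<le> -3 * E'"
    by (simp add: algebra_simps)
  then have "3 * E' \<le> cmod D"
    using abs_Re_le_cmod[of D] by linarith
  also have "cmod D = cmod S * (2 * cmod es)"
    by (simp flip: S_D add: norm_mult)
  also have "\<dots> \<le> cmod S * 3"
  proof -
    have "cmod es = sqrt (1 + \<delta>\<^sup>2)"
      unfolding es by (simp add: cmod_def)
    also have "\<dots> \<le> sqrt 2"
      using \<open>\<delta> * \<delta> < 1\<close> by (simp add: power2_eq_square)
    also have "\<dots> \<le> 3 / 2"
      by (rule real_le_lsqrt) (auto simp: power2_eq_square)
    finally show ?thesis
      by (intro mult_left_mono) auto
  qed
  finally show ?thesis
    unfolding S_def E'_def by linarith
qed

definition fourier_moment :: "(real \<times> real \<Rightarrow> real) \<Rightarrow> real \<Rightarrow> (real \<Rightarrow> real) \<Rightarrow> complex" where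
  "fourier_moment \<rho> k w = (LINT p|lborel. complex_of_real (\<rho> p * w (fst p)) * cis (- (k * snd p)))"

lemma borel_measurable_cis [measurable]: "cis \<in> borel_measurable borel"
  by (intro borel_measurable_continuous_onI continuous_on_cis continuous_on_id)

lemma fourier_moment_integrand_measurable:
  fixes \<rho> :: "real \<times> real \<Rightarrow> real"
  assumes "\<rho> \<in> borel_measurable lborel" and "w \<in> borel_measurable borel"
  shows "(\<lambda>p. complex_of_real (\<rho> p * w (fst p)) * cis (- (k * snd p))) \<in> borel_measurable lborel"
  using assms unfolding lborel_prod[symmetric] by measurable

lemma integrable_fourier_moment_integrand:
  fixes \<rho> :: "real \<times> real \<Rightarrow> real"
  assumes "integrable lborel \<rho>" and "w \<in> borel_measurable borel" and "bounded (range w)"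
  shows "integrable lborel (\<lambda>p. complex_of_real (\<rho> p * w (fst p)) * cis (- (k * snd p)))"
proof -
  obtain B where "\<forall>s. \<bar>w s\<bar> \<le> B"
    using assms(3) unfolding bounded_iff by auto
  then have "\<bar>w s\<bar> \<le> \<bar>B\<bar>" for s
    using abs_ge_self order_trans by blast
  then have bound: "AE p in lborel. norm (complex_of_real (\<rho> p * w (fst p)) * cis (- (k * snd p))) \<le> norm (B * \<rho> p)"
    by (intro AE_I2) (simp add: norm_mult abs_mult, metis abs_ge_zero mult.commute mult_left_mono)
  have "(\<lambda>p. complex_of_real (\<rho> p * w (fst p)) * cis (- (k * snd p))) \<in> borel_measurable lborel"
    using assms(1,2) by (intro fourier_moment_integrand_measurable) auto
  moreover have "integrable lborel (\<lambda>p. B * \<rho> p)"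
    using assms(1) by simp
  ultimately show ?thesis
    using Bochner_Integration.integrable_bound bound by blast
qed

lemma fourier_moment_eq_integral_rho_hat:
  assumes "integrable lborel \<rho>" and "w \<in> borel_measurable borel" and "bounded (range w)"
  shows "fourier_moment \<rho> k w = (LINT s|lborel. complex_of_real (w s) * rho_hat \<rho> s k)"
proof -
  let ?f = "\<lambda>p. complex_of_real (\<rho> p * w (fst p)) * cis (- (k * snd p))"
  have "integrable (lborel \<Otimes>\<^sub>M lborel) ?f"
    using integrable_fourier_moment_integrand[OF assms] by (simp add: lborel_prod)
  then have "fourier_moment \<rho> k w = (LINT s|lborel. LINT y|lborel. ?f (s, y))"
    unfolding fourier_moment_def lborel_prod[symmetric] by (rule lborel_pair.integral_fst'[symmetric])
  also have "\<dots> = (LINT s|lborel. complex_of_real (w s) * rho_hat \<rho> s k)"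
    unfolding rho_hat_def integral_mult_right_zero[symmetric]
    by (intro Bochner_Integration.integral_cong refl) (simp add: mult_ac)
  finally show ?thesis .
qed

lemma fourier_moment_scale:
  "fourier_moment \<rho> k (\<lambda>s. c * w s) = complex_of_real c * fourier_moment \<rho> k w"
  unfolding fourier_moment_def integral_mult_right_zero[symmetric]
  by (intro Bochner_Integration.integral_cong) (auto simp: mult_ac)

lemma fourier_moment_add:
  assumes "integrable lborel \<rho>"
    and "w1 \<in> borel_measurable borel" "bounded (range w1)"
    and "w2 \<in> borel_measurable borel" "bounded (range w2)"
  shows "fourier_moment \<rho> k (\<lambda>s. w1 s + w2 s) = fourier_moment \<rho> k w1 + fourier_moment \<rho> k w2"
proof -
  have "fourier_moment \<rho> k (\<lambda>s. w1 s + w2 s)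
      = (LINT p|lborel. complex_of_real (\<rho> p * w1 (fst p)) * cis (- (k * snd p))
                       + complex_of_real (\<rho> p * w2 (fst p)) * cis (- (k * snd p)))"
    unfolding fourier_moment_def by (intro Bochner_Integration.integral_cong) (simp_all add: algebra_simps)
  also have "\<dots> = fourier_moment \<rho> k w1 + fourier_moment \<rho> k w2"
    unfolding fourier_moment_def
    by (intro Bochner_Integration.integral_add integrable_fourier_moment_integrand[OF assms(1,2,3)]
        integrable_fourier_moment_integrand[OF assms(1,4,5)])
  finally show ?thesis .
qed

lemma fourier_moment_cong:
  assumes "\<rho> \<in> borel_measurable lborel"
    and "w1 \<in> borel_measurable borel" "w2 \<in> borel_measurable borel"
    and "\<forall>p\<in>ess_supp \<rho>. w1 (fst p) = w2 (fst p)"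
  shows "fourier_moment \<rho> k w1 = fourier_moment \<rho> k w2"
  unfolding fourier_moment_def
proof (rule integral_cong_AE)
  show "AE p in lborel. complex_of_real (\<rho> p * w1 (fst p)) * cis (- (k * snd p))
                      = complex_of_real (\<rho> p * w2 (fst p)) * cis (- (k * snd p))"
    using AE_in_ess_supp[OF assms(1)] by eventually_elim (use assms(4) in force)
qed (use assms fourier_moment_integrand_measurable in blast)+

lemma norm_of_real_mult_cis_minus_one_le:
  assumes "\<bar>v\<bar> \<le> 1" and "\<bar>v - 1\<bar> \<le> \<bar>k\<bar> * R" and "\<bar>y\<bar> \<le> Y"
  shows "cmod (complex_of_real v * cis (- (k * y)) - 1) \<le> \<bar>k\<bar> * (Y + R)"
proof -
  have "cmod (complex_of_real v * cis (- (k * y)) - 1)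
      = cmod (complex_of_real v * (cis (- (k * y)) - 1) + complex_of_real (v - 1))"
    by (simp add: algebra_simps)
  also have "\<dots> \<le> \<bar>v\<bar> * cmod (cis (- (k * y)) - 1) + \<bar>v - 1\<bar>"
    by (metis norm_mult norm_of_real norm_triangle_ineq)
  also have "\<dots> \<le> 1 * \<bar>k * y\<bar> + \<bar>k\<bar> * R"
    using assms(1,2) norm_cis_minus_one_le[of "- (k * y)"] by (intro add_mono mult_mono) auto
  also have "\<dots> \<le> \<bar>k\<bar> * (Y + R)"
    using assms(3) by (simp add: abs_mult distrib_left mult_left_mono)
  finally show ?thesis .
qed

text \<open>Since \<open>\<rho>\<close> has mean zero, \<open>1\<close> may be subtracted from the weight
  \<open>w(x) cis(-k y)\<close>, and on the support the difference is \<open>O(|k|)\<close>.\<close>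
lemma norm_fourier_moment_le:
  assumes "integrable lborel \<rho>" and "integral\<^sup>L lborel \<rho> = 0"
    and "w \<in> borel_measurable borel" and "bounded (range w)"
    and "\<forall>p\<in>ess_supp \<rho>. \<bar>w (fst p)\<bar> \<le> 1 \<and> \<bar>w (fst p) - 1\<bar> \<le> \<bar>k\<bar> * R \<and> \<bar>snd p\<bar> \<le> Y"
  shows "cmod (fourier_moment \<rho> k w) \<le> \<bar>k\<bar> * (Y + R) * (LINT p|lborel. \<bar>\<rho> p\<bar>)"
proof -
  let ?f = "\<lambda>p. complex_of_real (\<rho> p * w (fst p)) * cis (- (k * snd p))"
  let ?g = "\<lambda>p. complex_of_real (\<rho> p) * (complex_of_real (w (fst p)) * cis (- (k * snd p)) - 1)"
  have f_int: "integrable lborel ?f" and \<rho>_int: "integrable lborel (\<lambda>p. complex_of_real (\<rho> p))"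
    using integrable_fourier_moment_integrand[OF assms(1,3,4)] assms(1) by simp_all
  have g_eq: "?g = (\<lambda>p. ?f p - complex_of_real (\<rho> p))"
    by (simp add: fun_eq_iff algebra_simps)
  have g_int: "integrable lborel ?g"
    unfolding g_eq using f_int \<rho>_int by simp
  have "fourier_moment \<rho> k w = (LINT p|lborel. ?f p) - (LINT p|lborel. complex_of_real (\<rho> p))"
    using assms(2) by (simp add: fourier_moment_def)
  also have "\<dots> = (LINT p|lborel. ?g p)"
    unfolding g_eq by (rule Bochner_Integration.integral_diff[OF f_int \<rho>_int, symmetric])
  finally have "cmod (fourier_moment \<rho> k w) \<le> (LINT p|lborel. cmod (?g p))"
    by (simp add: integral_norm_bound)
  also have "\<dots> \<le> (LINT p|lborel. \<bar>k\<bar> * (Y + R) * \<bar>\<rho> p\<bar>)"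
  proof (rule integral_mono_AE)
    show "integrable lborel (\<lambda>p. cmod (?g p))"
      using g_int by simp
    show "integrable lborel (\<lambda>p. \<bar>k\<bar> * (Y + R) * \<bar>\<rho> p\<bar>)"
      using assms(1) by simp
    show "AE p in lborel. cmod (?g p) \<le> \<bar>k\<bar> * (Y + R) * \<bar>\<rho> p\<bar>"
      using AE_in_ess_supp[OF borel_measurable_integrable[OF assms(1)]]
    proof eventually_elim
      case (elim p)
      show ?case
      proof (cases "\<rho> p = 0")
        case False
        then have "cmod (complex_of_real (w (fst p)) * cis (- (k * snd p)) - 1) \<le> \<bar>k\<bar> * (Y + R)"
          using elim assms(5) by (intro norm_of_real_mult_cis_minus_one_le) auto
        then show ?thesis
          by (simp add: norm_mult mult_left_mono mult.commute)
      qed simp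
    qed
  qed
  finally show ?thesis by simp
qed

lemma window_measurable:
  fixes g :: "real \<Rightarrow> real"
  assumes "continuous_on UNIV g"
  shows "(\<lambda>s. indicator {c..d} s * g s) \<in> borel_measurable borel"
  using borel_measurable_continuous_onI[OF assms] by measurable

lemma bounded_range_window:
  fixes g :: "real \<Rightarrow> real"
  assumes "continuous_on {c..d} g"
  shows "bounded (range (\<lambda>s. indicator {c..d} s * g s))"
proof -
  obtain B where "\<forall>y\<in>g ` {c..d}. norm y \<le> B"
    using compact_continuous_image[OF assms compact_Icc] compact_imp_bounded bounded_iff by metis
  then have "\<bar>indicator {c..d} s * g s\<bar> \<le> \<bar>B\<bar>" for s
    by (cases "s \<in> {c..d}") force+
  then show ?thesis
    unfolding bounded_iff by auto
qed

lemma I_k_eq_fourier_moment: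
  assumes "integrable lborel \<rho>"
  shows "I_k \<rho> k = fourier_moment \<rho> k (\<lambda>s. indicator {d0 \<rho>..d1 \<rho>} s * exp (- \<bar>k\<bar> * s))"
proof -
  have "I_k \<rho> k = (LINT s|lborel. complex_of_real (indicator {d0 \<rho>..d1 \<rho>} s * exp (- \<bar>k\<bar> * s)) * rho_hat \<rho> s k)"
    unfolding I_k_def set_lebesgue_integral_def
    by (intro Bochner_Integration.integral_cong) (auto simp: scaleR_conv_of_real mult_ac)
  also have "\<dots> = fourier_moment \<rho> k (\<lambda>s. indicator {d0 \<rho>..d1 \<rho>} s * exp (- \<bar>k\<bar> * s))"
    by (intro fourier_moment_eq_integral_rho_hat[symmetric] assms window_measurable bounded_range_window
        continuous_intros)
  finally show ?thesis .
qed

lemma sinh_mult_diff_eq: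
  fixes K s x :: real
  shows "sinh (K * (s - x)) = exp (- K * x) / 2 * exp (K * s) - exp (K * x) / 2 * exp (- K * s)"
  by (simp add: sinh_def mult_exp_exp algebra_simps diff_divide_distrib)

lemma source_integral_eq:
  assumes "charge_class a \<rho>" and "d1 \<rho> \<le> x"
  shows "(LINT x':{a..x}|lborel. complex_of_real (sinh (\<bar>k\<bar> * (x' - x))) * rho_hat \<rho> x' k)
       = complex_of_real (exp (- \<bar>k\<bar> * x) / 2)
           * fourier_moment \<rho> k (\<lambda>s. indicator {d0 \<rho>..d1 \<rho>} s * exp (\<bar>k\<bar> * s))
         - complex_of_real (exp (\<bar>k\<bar> * x) / 2) * I_k \<rho> k"
proof -
  define W where "W g s = indicator {d0 \<rho>..d1 \<rho>} s * g s" for g :: "real \<Rightarrow> real" and s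
  have \<rho>: "integrable lborel \<rho>"
    using assms(1) by (simp add: charge_class_def)
  have W: "W g \<in> borel_measurable borel" "bounded (range (W g))" if "continuous_on UNIV g" for g
    unfolding W_def using that
    by (auto intro: window_measurable bounded_range_window continuous_on_subset)
  have scale: "fourier_moment \<rho> k (W (\<lambda>s. c * g s)) = complex_of_real c * fourier_moment \<rho> k (W g)" for c g
  proof -
    have "W (\<lambda>s. c * g s) = (\<lambda>s. c * W g s)"
      by (simp add: W_def fun_eq_iff mult.left_commute)
    then show ?thesis
      by (simp only: fourier_moment_scale)
  qed
  have "(LINT x':{a..x}|lborel. complex_of_real (sinh (\<bar>k\<bar> * (x' - x))) * rho_hat \<rho> x' k)
      = fourier_moment \<rho> k (\<lambda>s. indicator {a..x} s * sinh (\<bar>k\<bar> * (s - x)))"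
    unfolding set_lebesgue_integral_def
    by (subst fourier_moment_eq_integral_rho_hat[OF \<rho> window_measurable bounded_range_window])
       (auto intro!: continuous_intros Bochner_Integration.integral_cong simp: scaleR_conv_of_real mult_ac)
  also have "\<dots> = fourier_moment \<rho> k (\<lambda>s. W (\<lambda>s. exp (- \<bar>k\<bar> * x) / 2 * exp (\<bar>k\<bar> * s)) s
                                         + W (\<lambda>s. - (exp (\<bar>k\<bar> * x) / 2) * exp (- \<bar>k\<bar> * s)) s)"
  proof (rule fourier_moment_cong)
    show "\<forall>p\<in>ess_supp \<rho>. indicator {a..x} (fst p) * sinh (\<bar>k\<bar> * (fst p - x))
        = W (\<lambda>s. exp (- \<bar>k\<bar> * x) / 2 * exp (\<bar>k\<bar> * s)) (fst p)
          + W (\<lambda>s. - (exp (\<bar>k\<bar> * x) / 2) * exp (- \<bar>k\<bar> * s)) (fst p)"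
      using charge_class_fst_ess_supp[OF assms(1)] charge_class_less_d0[OF assms(1)] assms(2)
      by (fastforce simp: W_def sinh_mult_diff_eq)
  qed (intro borel_measurable_integrable[OF \<rho>] window_measurable borel_measurable_add W continuous_intros)+
  also have "\<dots> = complex_of_real (exp (- \<bar>k\<bar> * x) / 2) * fourier_moment \<rho> k (W (\<lambda>s. exp (\<bar>k\<bar> * s)))
                 - complex_of_real (exp (\<bar>k\<bar> * x) / 2) * fourier_moment \<rho> k (W (\<lambda>s. exp (- \<bar>k\<bar> * s)))"
    by (subst fourier_moment_add[OF \<rho> W W], (intro continuous_intros)+) (simp only: scale of_real_minus, simp)
  finally show ?thesis
    unfolding I_k_eq_fourier_moment[OF \<rho>] W_def .
qed

lemma far_field_identity:
  fixes A P Q I F :: complex and K a x :: real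
  assumes "K > 0" and "complex_of_real K * P + Q \<noteq> 0"
    and "A = I / (complex_of_real (exp (- K * a)) * (complex_of_real K * P + Q))"
  shows "A * P * complex_of_real (cosh (K * (x - a)))
         + A * Q / complex_of_real K * complex_of_real (sinh (K * (x - a)))
         + 1 / complex_of_real K * (complex_of_real (exp (- K * x) / 2) * F
                                    - complex_of_real (exp (K * x) / 2) * I)
       = A * (P - Q / complex_of_real K) * complex_of_real (exp (- (K * (x - a)))) / 2
         + complex_of_real (exp (- K * x) / (2 * K)) * F"
proof -
  define E where "E = exp (K * (x - a))"
  define ea where "ea = exp (K * a)"
  have pos: "E > 0" "ea > 0"
    unfolding E_def ea_def by auto
  have exps: "exp (K * x) = E * ea" "exp (- K * x) = 1 / (E * ea)"
      "exp (- K * a) = 1 / ea" "exp (- (K * (x - a))) = 1 / E"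
    unfolding E_def ea_def by (simp_all add: mult_exp_exp exp_minus field_simps)
  have hyp: "cosh (K * (x - a)) = (E + 1 / E) / 2" "sinh (K * (x - a)) = (E - 1 / E) / 2"
    unfolding cosh_def sinh_def E_def by (simp_all add: exp_minus inverse_eq_divide)
  have I_eq: "I = A * complex_of_real (1 / ea) * (complex_of_real K * P + Q)"
    using assms(2,3) pos unfolding exps by (simp add: field_simps)
  show ?thesis
    unfolding hyp exps I_eq using assms(1) pos by (simp add: field_simps)
qed

lemma Vhat_m_far_field_eq:
  assumes "charge_class a \<rho>" and "d1 \<rho> \<le> x" and "k \<noteq> 0"
    and "psi_plus a \<beta> lam \<delta> k + psi_minus a \<beta> lam \<delta> k / complex_of_real \<bar>k\<bar> \<noteq> 0"
  shows "Vhat_m a \<beta> lam \<delta> \<rho> x k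
       = A_k a \<beta> lam \<delta> \<rho> k * (psi_plus a \<beta> lam \<delta> k - psi_minus a \<beta> lam \<delta> k / complex_of_real \<bar>k\<bar>)
           * complex_of_real (exp (- (\<bar>k\<bar> * (x - a)))) / 2
         + complex_of_real (exp (- \<bar>k\<bar> * x) / (2 * \<bar>k\<bar>))
           * fourier_moment \<rho> k (\<lambda>s. indicator {d0 \<rho>..d1 \<rho>} s * exp (\<bar>k\<bar> * s))"
proof -
  have "complex_of_real \<bar>k\<bar> * psi_plus a \<beta> lam \<delta> k + psi_minus a \<beta> lam \<delta> k
      = complex_of_real \<bar>k\<bar> * (psi_plus a \<beta> lam \<delta> k + psi_minus a \<beta> lam \<delta> k / complex_of_real \<bar>k\<bar>)"
    using assms(3) by (simp add: field_simps)
  then have nz: "complex_of_real \<bar>k\<bar> * psi_plus a \<beta> lam \<delta> k + psi_minus a \<beta> lam \<delta> k \<noteq> 0"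
    using assms(3,4) by simp
  show ?thesis
    unfolding Vhat_m_def source_integral_eq[OF assms(1,2)]
    by (rule far_field_identity[OF _ nz]) (simp_all add: A_k_def assms(3))
qed

definition charge_scale :: "(real \<times> real \<Rightarrow> real) \<Rightarrow> real \<Rightarrow> real" where
  "charge_scale \<rho> Y = (Y + (d1 \<rho> - d0 \<rho>)) * (LINT p|lborel. \<bar>\<rho> p\<bar>)"

lemma charge_scale_nonneg:
  assumes "charge_class a \<rho>" and "\<forall>p\<in>ess_supp \<rho>. \<bar>snd p\<bar> \<le> Y"
  shows "0 \<le> charge_scale \<rho> Y"
proof -
  have "0 \<le> Y"
    using assms(2) charge_class_ess_supp_ne[OF assms(1)] by force
  then show ?thesis
    unfolding charge_scale_def using charge_class_d0_le_d1[OF assms(1)] by simp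
qed

lemma norm_fourier_moment_window_le:
  assumes "charge_class a \<rho>" and "\<forall>p\<in>ess_supp \<rho>. \<bar>snd p\<bar> \<le> Y" and "c \<in> {d0 \<rho>..d1 \<rho>}"
  shows "cmod (fourier_moment \<rho> k (\<lambda>s. indicator {d0 \<rho>..d1 \<rho>} s * exp (- \<bar>k\<bar> * \<bar>s - c\<bar>)))
           \<le> \<bar>k\<bar> * charge_scale \<rho> Y"
proof -
  have "\<bar>exp (- \<bar>k\<bar> * \<bar>s - c\<bar>)\<bar> \<le> 1 \<and> \<bar>exp (- \<bar>k\<bar> * \<bar>s - c\<bar>) - 1\<bar> \<le> \<bar>k\<bar> * (d1 \<rho> - d0 \<rho>)"
    if "s \<in> {d0 \<rho>..d1 \<rho>}" for s
  proof -
    have "\<bar>exp (- (\<bar>k\<bar> * \<bar>s - c\<bar>)) - 1\<bar> \<le> \<bar>k\<bar> * \<bar>s - c\<bar>"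
      by (intro abs_exp_neg_minus_one_le) simp
    also have "\<dots> \<le> \<bar>k\<bar> * (d1 \<rho> - d0 \<rho>)"
      using that assms(3) by (intro mult_left_mono) auto
    finally show ?thesis
      by simp
  qed
  then show ?thesis
    using assms charge_class_fst_ess_supp[OF assms(1)] unfolding charge_scale_def
    by (intro norm_fourier_moment_le[THEN order_trans] window_measurable bounded_range_window
        continuous_intros) (auto simp: charge_class_def mult.assoc)
qed

lemma norm_I_k_le:
  assumes "0 \<le> a" and "charge_class a \<rho>" and "\<forall>p\<in>ess_supp \<rho>. \<bar>snd p\<bar> \<le> Y"
  shows "cmod (I_k \<rho> k) \<le> \<bar>k\<bar> * charge_scale \<rho> Y"
proof -
  let ?d0 = "d0 \<rho>" and ?d1 = "d1 \<rho>"
  have "(\<lambda>s. indicator {?d0..?d1} s * exp (- \<bar>k\<bar> * s))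
      = (\<lambda>s. exp (- \<bar>k\<bar> * ?d0) * (indicator {?d0..?d1} s * exp (- \<bar>k\<bar> * \<bar>s - ?d0\<bar>)))"
    by (auto simp: fun_eq_iff indicator_def mult_exp_exp algebra_simps)
  then have "I_k \<rho> k = complex_of_real (exp (- \<bar>k\<bar> * ?d0))
      * fourier_moment \<rho> k (\<lambda>s. indicator {?d0..?d1} s * exp (- \<bar>k\<bar> * \<bar>s - ?d0\<bar>))"
    using assms(2) by (simp add: I_k_eq_fourier_moment fourier_moment_scale charge_class_def)
  also have "cmod \<dots> \<le> 1 * (\<bar>k\<bar> * charge_scale \<rho> Y)"
    using charge_class_less_d0[OF assms(2)] assms charge_class_d0_le_d1[OF assms(2)]
    by (simp only: norm_mult norm_of_real abs_exp_cancel)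
       (intro mult_mono norm_fourier_moment_window_le; simp)
  finally show ?thesis
    by simp
qed

lemma norm_fourier_moment_exp_le:
  assumes "charge_class a \<rho>" and "\<forall>p\<in>ess_supp \<rho>. \<bar>snd p\<bar> \<le> Y"
  shows "cmod (fourier_moment \<rho> k (\<lambda>s. indicator {d0 \<rho>..d1 \<rho>} s * exp (\<bar>k\<bar> * s)))
           \<le> exp (\<bar>k\<bar> * d1 \<rho>) * (\<bar>k\<bar> * charge_scale \<rho> Y)"
proof -
  let ?d0 = "d0 \<rho>" and ?d1 = "d1 \<rho>"
  have "(\<lambda>s. indicator {?d0..?d1} s * exp (\<bar>k\<bar> * s))
      = (\<lambda>s. exp (\<bar>k\<bar> * ?d1) * (indicator {?d0..?d1} s * exp (- \<bar>k\<bar> * \<bar>s - ?d1\<bar>)))"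
    by (auto simp: fun_eq_iff indicator_def mult_exp_exp algebra_simps)
  then show ?thesis
    using assms charge_class_d0_le_d1[OF assms(1)]
    by (simp only: fourier_moment_scale norm_mult norm_of_real abs_exp_cancel)
       (intro mult_left_mono norm_fourier_moment_window_le; simp)
qed

lemma norm_A_k_le:
  assumes "0 \<le> a" and "charge_class a \<rho>" and "\<forall>p\<in>ess_supp \<rho>. \<bar>snd p\<bar> \<le> Y"
    and "0 < \<delta>" "\<delta> < 1" and "0 \<le> mu \<beta> lam \<delta>" and "k \<noteq> 0"
  shows "cmod (A_k a \<beta> lam \<delta> \<rho> k) \<le> charge_scale \<rho> Y * (exp (\<bar>k\<bar> * a))\<^sup>2"
proof -
  define K where "K = \<bar>k\<bar>"
  define S where "S = psi_plus a \<beta> lam \<delta> k + psi_minus a \<beta> lam \<delta> k / complex_of_real K"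
  have K: "0 < K"
    using assms(7) unfolding K_def by simp
  have S: "exp (- K * a) \<le> cmod S"
    unfolding S_def K_def by (rule norm_psi_plus_add_psi_minus_ge[OF assms(4-7)])
  have "complex_of_real K * S = complex_of_real K * psi_plus a \<beta> lam \<delta> k + psi_minus a \<beta> lam \<delta> k"
    unfolding S_def using K by (simp add: distrib_left)
  then have "A_k a \<beta> lam \<delta> \<rho> k = I_k \<rho> k / (complex_of_real (exp (- K * a)) * (complex_of_real K * S))"
    unfolding A_k_def K_def by simp
  then have "cmod (A_k a \<beta> lam \<delta> \<rho> k) = cmod (I_k \<rho> k) / (exp (- K * a) * (K * cmod S))"
    using K by (simp add: norm_mult norm_divide)
  also have "\<dots> \<le> (K * charge_scale \<rho> Y) / (exp (- K * a) * (K * exp (- K * a)))"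
    using norm_I_k_le[OF assms(1-3)] S K charge_scale_nonneg[OF assms(2,3)]
    unfolding K_def by (intro frac_le mult_left_mono) auto
  also have "\<dots> = charge_scale \<rho> Y * (exp (K * a))\<^sup>2"
    using K by (simp add: exp_minus field_simps power2_eq_square)
  finally show ?thesis
    unfolding K_def .
qed

text \<open>The growth \<open>exp (3 |k| a)\<close> of \<open>A_k\<close> times the \<open>\<psi>\<close>-difference is beaten by
  \<open>exp (- |k| (x - a))\<close> because \<open>x > 5 a\<close>.\<close>
lemma norm_Vhat_m_le:
  assumes "0 < a" and "charge_class a \<rho>" and "\<forall>p\<in>ess_supp \<rho>. \<bar>snd p\<bar> \<le> Y"
    and "0 < \<delta>" "\<delta> < 1" and "0 \<le> mu \<beta> lam \<delta>" and "k \<noteq> 0"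
    and "cmod (psi_plus a \<beta> lam \<delta> k - psi_minus a \<beta> lam \<delta> k / complex_of_real \<bar>k\<bar>)
           \<le> 2 * \<Lambda> * exp (\<bar>k\<bar> * a)"
    and "a + max (d1 \<rho>) (4 * a) < x"
  shows "cmod (Vhat_m a \<beta> lam \<delta> \<rho> x k) \<le> (\<Lambda> + 1) * charge_scale \<rho> Y * exp (- \<bar>k\<bar> * a)"
proof -
  define K where "K = \<bar>k\<bar>"
  define M where "M = charge_scale \<rho> Y"
  define A where "A = A_k a \<beta> lam \<delta> \<rho> k"
  define T where "T = psi_plus a \<beta> lam \<delta> k - psi_minus a \<beta> lam \<delta> k / complex_of_real K"
  define F where "F = fourier_moment \<rho> k (\<lambda>s. indicator {d0 \<rho>..d1 \<rho>} s * exp (K * s))"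
  have K: "0 < K" and M: "0 \<le> M" and \<Lambda>: "0 \<le> \<Lambda>"
    using assms(7) charge_scale_nonneg[OF assms(2,3)] order_trans[OF norm_ge_zero assms(8)]
    unfolding K_def M_def by (auto simp: zero_le_mult_iff)
  have "psi_plus a \<beta> lam \<delta> k + psi_minus a \<beta> lam \<delta> k / complex_of_real \<bar>k\<bar> \<noteq> 0"
    using norm_psi_plus_add_psi_minus_ge[OF assms(4-7), of a] by auto
  then have V: "Vhat_m a \<beta> lam \<delta> \<rho> x k = A * T * complex_of_real (exp (- (K * (x - a)))) / 2
      + complex_of_real (exp (- K * x) / (2 * K)) * F"
    unfolding A_def T_def F_def K_def using assms(1,9) 
    by (intro Vhat_m_far_field_eq[OF assms(2) _ assms(7)]) auto
  have "cmod A * cmod T \<le> (M * (exp (K * a))\<^sup>2) * (2 * \<Lambda> * exp (K * a))"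
    using norm_A_k_le[OF _ assms(2-7)] assms(1,8) M
    unfolding A_def T_def K_def M_def by (intro mult_mono) auto
  then have "cmod (A * T * complex_of_real (exp (- (K * (x - a)))) / 2)
      \<le> (M * (exp (K * a))\<^sup>2) * (2 * \<Lambda> * exp (K * a)) * exp (- (K * (x - a))) / 2"
    by (simp add: norm_mult norm_divide)
  also have "\<dots> = M * \<Lambda> * exp (- (K * (x - 4 * a)))"
    by (simp add: power2_eq_square mult_exp_exp algebra_simps)
  also have "\<dots> \<le> M * \<Lambda> * exp (- K * a)"
    using M \<Lambda> K assms(9) by (intro mult_left_mono) auto
  finally have near: "cmod (A * T * complex_of_real (exp (- (K * (x - a)))) / 2) \<le> M * \<Lambda> * exp (- K * a)" .
  have "cmod (complex_of_real (exp (- K * x) / (2 * K)) * F) = exp (- K * x) / (2 * K) * cmod F"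
    using K by (simp only: norm_mult norm_of_real) simp
  also have "\<dots> \<le> exp (- K * x) / (2 * K) * (exp (K * d1 \<rho>) * (K * M))"
    using norm_fourier_moment_exp_le[OF assms(2,3), of k] K
    unfolding F_def K_def M_def by (intro mult_left_mono) auto
  also have "\<dots> = M / 2 * exp (- (K * (x - d1 \<rho>)))"
    using K by (simp add: mult_exp_exp field_simps)
  also have "\<dots> \<le> M * exp (- K * a)"
    using M K assms(9) by (intro mult_mono) auto
  finally have source: "cmod (complex_of_real (exp (- K * x) / (2 * K)) * F) \<le> M * exp (- K * a)" .
  show ?thesis
    unfolding V using norm_triangle_le[OF add_mono[OF near source]]
    unfolding K_def M_def by (simp add: algebra_simps)
qed

lemma add_mu_le:
  assumes "0 < \<beta>" and "0 < \<delta>" "\<delta> \<le> 1"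
  shows "\<delta> + mu \<beta> lam \<delta> \<le> 2 + \<bar>lam\<bar>"
proof -
  have "0 \<le> \<delta> powr \<beta>" "\<delta> powr \<beta> \<le> 1"
    using assms by (auto intro: powr_le1)
  then have "lam * \<delta> powr \<beta> \<le> \<bar>lam\<bar>"
    by (metis abs_ge_self abs_mult abs_of_nonneg mult_left_le order_trans abs_ge_zero)
  then show ?thesis
    unfolding mu_def using assms by linarith
qed

lemma norm_psi_diff_le:
  assumes "(cmod (psi_plus a \<beta> lam \<delta> k - psi_minus a \<beta> lam \<delta> k / complex_of_real \<bar>k\<bar>))\<^sup>2
             \<le> 5 / 2 * (\<delta> + mu \<beta> lam \<delta>)\<^sup>2 * exp (2 * \<bar>k\<bar> * a)"
    and "0 \<le> \<delta> + mu \<beta> lam \<delta>" "\<delta> + mu \<beta> lam \<delta> \<le> \<Lambda>"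
  shows "cmod (psi_plus a \<beta> lam \<delta> k - psi_minus a \<beta> lam \<delta> k / complex_of_real \<bar>k\<bar>)
           \<le> 2 * \<Lambda> * exp (\<bar>k\<bar> * a)"
proof (rule power2_le_imp_le)
  have "(\<delta> + mu \<beta> lam \<delta>)\<^sup>2 \<le> \<Lambda>\<^sup>2"
    by (rule power_mono[OF assms(3,2)])
  then have "5 / 2 * (\<delta> + mu \<beta> lam \<delta>)\<^sup>2 \<le> 4 * \<Lambda>\<^sup>2"
    using zero_le_power2[of "\<delta> + mu \<beta> lam \<delta>"] by linarith
  moreover have "(2 * \<Lambda> * exp (\<bar>k\<bar> * a))\<^sup>2 = 4 * \<Lambda>\<^sup>2 * exp (2 * \<bar>k\<bar> * a)"
    by (simp add: power_mult_distrib exp_double[symmetric] mult.assoc)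
  ultimately have "5 / 2 * (\<delta> + mu \<beta> lam \<delta>)\<^sup>2 * exp (2 * \<bar>k\<bar> * a) \<le> (2 * \<Lambda> * exp (\<bar>k\<bar> * a))\<^sup>2"
    by (simp add: mult_right_mono)
  then show "(cmod (psi_plus a \<beta> lam \<delta> k - psi_minus a \<beta> lam \<delta> k / complex_of_real \<bar>k\<bar>))\<^sup>2
      \<le> (2 * \<Lambda> * exp (\<bar>k\<bar> * a))\<^sup>2"
    using assms(1) by linarith
  show "0 \<le> 2 * \<Lambda> * exp (\<bar>k\<bar> * a)"
    using assms(2,3) by simp
qed

lemma Vhat_m_at_zero: "Vhat_m a \<beta> lam \<delta> \<rho> x 0 = 0"
  by (simp add: Vhat_m_def A_k_def psi_minus_def)

theorem lemma6p5:
  fixes a \<beta> lam \<delta>\<mu> \<delta>\<psi> :: real and \<rho> :: "real \<times> real \<Rightarrow> real"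
  assumes "a > 0"
    and "feasible \<beta> lam"
    and "0 < \<delta>\<mu>" and "\<delta>\<mu> < 1"
    and "\<forall>\<delta>. 0 < \<delta> \<and> \<delta> \<le> \<delta>\<mu> \<longrightarrow> mu \<beta> lam \<delta> \<ge> 0"
    and "0 < \<delta>\<psi>" and "\<delta>\<psi> \<le> \<delta>\<mu>"
    and "\<forall>\<delta> k. 0 < \<delta> \<and> \<delta> \<le> \<delta>\<psi> \<and> k \<noteq> 0 \<longrightarrow>
           (cmod (psi_plus a \<beta> lam \<delta> k - psi_minus a \<beta> lam \<delta> k / complex_of_real \<bar>k\<bar>))\<^sup>2
             \<le> 5 / 2 * (\<delta> + mu \<beta> lam \<delta>)\<^sup>2 * exp (2 * \<bar>k\<bar> * a)"
    and "charge_class a \<rho>"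
  shows "\<exists>C10 > 0. \<forall>\<delta> x y. 0 < \<delta> \<and> \<delta> \<le> \<delta>\<psi> \<and> x > a + max (d1 \<rho>) (4 * a) \<longrightarrow>
           cmod (V_m a \<beta> lam \<delta> \<rho> x y) \<le> C10"
proof -
  obtain Y where Y: "\<forall>p\<in>ess_supp \<rho>. \<bar>snd p\<bar> \<le> Y"
    using charge_class_snd_ess_supp_bounded[OF assms(9)] .
  define G where "G = (2 + \<bar>lam\<bar> + 1) * charge_scale \<rho> Y"
  define C10 where "C10 = 1 / (2 * pi) * (LINT k|lborel. G * exp (- \<bar>k\<bar> * a)) + 1"
  have "0 \<le> G"
    unfolding G_def using charge_scale_nonneg[OF assms(9) Y] by simp
  then have "0 < C10"
    unfolding C10_def by (simp add: add_nonneg_pos)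
  moreover have "cmod (V_m a \<beta> lam \<delta> \<rho> x y) \<le> C10"
    if \<delta>: "0 < \<delta>" "\<delta> \<le> \<delta>\<psi>" and x: "a + max (d1 \<rho>) (4 * a) < x" for \<delta> x y
  proof -
    have \<delta>': "\<delta> < 1" "0 \<le> mu \<beta> lam \<delta>" "\<delta> + mu \<beta> lam \<delta> \<le> 2 + \<bar>lam\<bar>"
      using \<delta> assms(2,4,5,7) add_mu_le[of \<beta> \<delta> lam] by (auto simp: feasible_def)
    have "cmod (Vhat_m a \<beta> lam \<delta> \<rho> x k) \<le> G * exp (- \<bar>k\<bar> * a)" for k
    proof (cases "k = 0")
      case False
      have "cmod (psi_plus a \<beta> lam \<delta> k - psi_minus a \<beta> lam \<delta> k / complex_of_real \<bar>k\<bar>)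
          \<le> 2 * (2 + \<bar>lam\<bar>) * exp (\<bar>k\<bar> * a)"
        using assms(8) \<delta> \<delta>' False by (intro norm_psi_diff_le) auto
      from norm_Vhat_m_le[OF assms(1,9) Y \<delta>(1) \<delta>'(1,2) False this x]
      show ?thesis
        unfolding G_def by simp
    qed (simp add: Vhat_m_at_zero \<open>0 \<le> G\<close>)
    then have "cmod (V_m a \<beta> lam \<delta> \<rho> x y) \<le> 1 / (2 * pi) * (LINT k|lborel. G * exp (- \<bar>k\<bar> * a))"
      unfolding V_m_def using integrable_exp_neg_abs_mult[OF assms(1)]
      by (intro norm_inverse_fourier_le) auto
    then show ?thesis
      unfolding C10_def by simp
  qed
  ultimately show ?thesis
    by blast
qed

end
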